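(* An $r$-partite partition $\boldsymbol\lambda=(\lambda^0\mid\lambda^1\mid\cdots\mid\lambda^{r-1})$ of size $n$ is the cycle type of an absolute square in $G(r,1,n)$ (an element of the form $\pi\overline{\pi}$ with $\pi\in G(r,1,n)$) if and only if: (1) each even part of $\lambda^0$ has even multiplicity; (2) $\lambda^t=\lambda^{r-t}$ for all $1\le t<r/2$; and (3) when $r$ is even, each part of $\lambda^{r/2}$ has even multiplicity.
   Context: $G(r,1,n)=\{(z_1,\dots,z_n;\sigma):z_i\in\mathbb{Z}_r,\sigma\in S_n\}$ with product $(z;\sigma)(z';\sigma')=(z_1+z'_{\sigma^{-1}(1)},\dots,z_n+z'_{\sigma^{-1}(n)};\sigma\sigma')$. The bar operation is $\overline{(z_1,\dots,z_n;\sigma)}=(-z_1,\dots,-z_n;\sigma)$. The color of a cycle $(u_1,\dots,u_\ell)$ of $\sigma$ is $z_{u_1}+\cdots+z_{u_\ell}\in\mathbb{Z}_r$; the cycle type of $(z;\sigma)$ is $(\lambda^0\mid\cdots\mid\lambda^{r-1})$ where $\lambda^j$ is the partition of the lengths of cycles of color $j$. *)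

theory Defs
  imports "HOL-Combinatorics.Permutations" "HOL-Library.Multiset"
begin

text \<open>Elements of G(r,1,n) are pairs (z, sigma): sigma a permutation of {0..<n}
  (the paper's {1..n} shifted by one), z i the colour in Z_r of position i,
  represented by a natural number < r (and 0 outside {0..<n}).\<close>

type_synonym gelt = "(nat \<Rightarrow> nat) \<times> (nat \<Rightarrow> nat)"

definition in_G :: "nat \<Rightarrow> nat \<Rightarrow> gelt \<Rightarrow> bool" where
  "in_G r n g \<longleftrightarrow> snd g permutes {0..<n} \<and> (\<forall>i<n. fst g i < r) \<and> (\<forall>i\<ge>n. fst g i = 0)"

definition gmult :: "nat \<Rightarrow> nat \<Rightarrow> gelt \<Rightarrow> gelt \<Rightarrow> gelt" where
  "gmult r n g h = ((\<lambda>i. if i < n then (fst g i + fst h (inv (snd g) i)) mod r else 0),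
                    snd g \<circ> snd h)"

definition gbar :: "nat \<Rightarrow> nat \<Rightarrow> gelt \<Rightarrow> gelt" where
  "gbar r n g = ((\<lambda>i. if i < n then (r - fst g i) mod r else 0), snd g)"

definition cycle_of :: "(nat \<Rightarrow> nat) \<Rightarrow> nat \<Rightarrow> nat set" where
  "cycle_of s u = {(s ^^ k) u | k. True}"

definition cycles_of :: "nat \<Rightarrow> (nat \<Rightarrow> nat) \<Rightarrow> nat set set" where
  "cycles_of n s = cycle_of s ` {0..<n}"

definition cycle_color :: "nat \<Rightarrow> gelt \<Rightarrow> nat set \<Rightarrow> nat" where
  "cycle_color r g C = (\<Sum>u\<in>C. fst g u) mod r"

definition cycle_type :: "nat \<Rightarrow> nat \<Rightarrow> gelt \<Rightarrow> nat \<Rightarrow> nat multiset" where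
  "cycle_type r n g j = image_mset card (mset_set {C \<in> cycles_of n (snd g). cycle_color r g C = j})"

definition rpartite_partition :: "nat \<Rightarrow> nat \<Rightarrow> (nat \<Rightarrow> nat multiset) \<Rightarrow> bool" where
  "rpartite_partition r n lam \<longleftrightarrow> (\<forall>j. 0 \<notin># lam j) \<and> (\<forall>j\<ge>r. lam j = {#})
     \<and> (\<Sum>j<r. sum_mset (lam j)) = n"

end

theory Submission
  imports
    Defs
    "HOL-Combinatorics.Cycles"
    "HOL-Combinatorics.Orbits"
    "HOL-Number_Theory.Cong"
    "HOL-Library.Z2"
    "HOL-Library.Disjoint_Sets"
begin

text \<open>
  The absolute square of \<open>(z; \<sigma>)\<close> has permutation \<open>\<sigma>\<^sup>2\<close> and color \<open>z (\<sigma> x) - z x\<close> at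
  \<open>\<sigma> x\<close>. Hence \<open>\<sigma>\<close> maps every cycle \<open>C\<close> of \<open>\<sigma>\<^sup>2\<close> to a cycle
  \<open>\<sigma> C\<close> of the same length whose color is minus that of \<open>C\<close>: the two colors add up to a
  telescoping sum. This involution on the cycles of \<open>\<sigma>\<^sup>2\<close> pairs color \<open>t\<close> with color \<open>-t\<close>,
  and its fixed points are whole cycles of \<open>\<sigma>\<close>, which have color \<open>0\<close> and odd length.
  Counting the cycles of each length and color gives the three conditions.

  Conversely, a multipartition satisfying them is a sum of blocks, each a single odd part of
  color \<open>0\<close> or two equal parts of colors \<open>t\<close> and \<open>-t\<close>. A block of size \<open>m\<close> is realised by
  appending \<open>m\<close> positions on which \<open>\<sigma>\<close> is a cyclic shift: for odd \<open>m\<close> its square is again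
  an \<open>m\<close>-cycle, of color \<open>0\<close> if the new colors are \<open>0\<close>; for \<open>m = 2 k\<close> it splits into two
  \<open>k\<close>-cycles, and putting color \<open>t\<close> on the first new position only gives them colors \<open>t\<close>
  and \<open>-t\<close>.
\<close>

lemma even_card_involution:
  assumes "finite A" "\<And>x. x \<in> A \<Longrightarrow> f x \<in> A" "\<And>x. x \<in> A \<Longrightarrow> f (f x) = x"
    and "\<And>x. x \<in> A \<Longrightarrow> f x \<noteq> x"
  shows "even (card A)"
proof -
  have "(\<Sum>x\<in>A. 1 :: bit) = 0"
    by (rule sum_involution_eq_0[where h = f]) (use assms in auto)
  then have "even (of_nat (card A) :: bit)"
    by simp
  then show ?thesis
    by (simp only: even_of_nat_iff)
qed

lemma image_mset_mset_set_filter_pair: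
  assumes "a \<noteq> b"
  shows "image_mset f (mset_set {x \<in> {a, b}. P x})
           = (if P a then {#f a#} else {#}) + (if P b then {#f b#} else {#})"
proof -
  have "{x \<in> {a, b}. P x} = (if P a then {a} else {}) \<union> (if P b then {b} else {})"
    by auto
  then show ?thesis
    using assms by (cases "P a"; cases "P b") (simp_all only: if_True if_False, simp_all)
qed

lemma sum_single_part:
  fixes t r k :: nat
  assumes "t < r"
  shows "(\<Sum>j<r. sum_mset (if j = t then {#k#} else {#})) = k"
proof -
  have "(\<Sum>j<r. sum_mset (if j = t then {#k#} else {#})) = (\<Sum>j<r. if j = t then k else 0)"
    by (rule sum.cong) auto
  also have "\<dots> = k"
    using assms by (subst sum.delta) auto
  finally show ?thesis .
qed

lemma neg_neg_mod: "t < r \<Longrightarrow> (r - (r - t) mod r) mod r = (t :: nat)"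
  by (cases "t = 0") auto

lemma neg_mod_eq_iff:
  fixes r s t :: nat
  assumes "s < r" "t < r"
  shows "(r - s) mod r = t \<longleftrightarrow> (r - t) mod r = s"
  using neg_neg_mod[OF assms(1)] neg_neg_mod[OF assms(2)] by auto

lemma neg_mod_inj:
  fixes r s t :: nat
  assumes "s < r" "t < r"
  shows "(r - s) mod r = (r - t) mod r \<longleftrightarrow> s = t"
  using neg_neg_mod[OF assms(1)] neg_neg_mod[OF assms(2)] by metis

lemma neg_mod_unique:
  fixes a b r :: nat
  assumes "a < r" "b < r" "[a + b = 0] (mod r)"
  shows "b = (r - a) mod r"
proof -
  have "[a + b = a + (r - a)] (mod r)"
    using assms(1,3) by (simp add: cong_def)
  then have "[b = r - a] (mod r)"
    by (simp add: cong_add_lcancel_nat)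
  then show ?thesis
    using assms(2) by (simp add: cong_def)
qed

subsection \<open>Cycles of a permutation and of its square\<close>

lemma funpow_in_cycle_of: "(f ^^ k) u \<in> cycle_of f u"
  unfolding cycle_of_def by blast

lemma self_in_cycle_of: "u \<in> cycle_of f u"
  using funpow_in_cycle_of[where k = 0] by simp

lemma cycle_of_eq_orbit: "permutation f \<Longrightarrow> cycle_of f u = orbit f u"
  by (simp add: cycle_of_def orbit_altdef_permutation)

lemma cycle_of_eq: "permutation f \<Longrightarrow> v \<in> cycle_of f u \<Longrightarrow> cycle_of f v = cycle_of f u"
  by (simp add: cycle_of_eq_orbit cyclic_on_orbit' orbit_cyclic_eq3)

lemma cycle_of_subset: "f permutes S \<Longrightarrow> u \<in> S \<Longrightarrow> cycle_of f u \<subseteq> S"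
  by (auto simp: cycle_of_def permutes_in_image permutes_funpow)

lemma cycle_of_cong:
  assumes "u \<in> S" "\<And>x. x \<in> S \<Longrightarrow> f x = h x" "\<And>x. x \<in> S \<Longrightarrow> h x \<in> S"
  shows "cycle_of f u = cycle_of h u"
proof -
  have "(f ^^ k) u = (h ^^ k) u \<and> (h ^^ k) u \<in> S" for k
    by (induction k) (use assms in auto)
  then show ?thesis
    by (simp add: cycle_of_def)
qed

lemma image_cycle_of_commute:
  assumes "g \<circ> f = f \<circ> g"
  shows "g ` cycle_of f u = cycle_of f (g u)"
proof -
  have eq: "g ((f ^^ k) u) = (f ^^ k) (g u)" for k
    by (induction k) (simp_all add: fun_eq_iff[THEN iffD1, OF assms, simplified])
  have "g ` cycle_of f u = {g ((f ^^ k) u) | k. True}"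
    by (auto simp: cycle_of_def)
  also have "\<dots> = cycle_of f (g u)"
    by (simp add: eq cycle_of_def)
  finally show ?thesis .
qed

lemma image_cycle_of:
  assumes f: "permutation f"
  shows "f ` cycle_of f u = cycle_of f u"
proof -
  have "f ` cycle_of f u = cycle_of f (f u)"
    by (rule image_cycle_of_commute) simp
  also have "\<dots> = cycle_of f u"
    by (rule cycle_of_eq[OF f]) (use funpow_in_cycle_of[where k = 1, of f u] in simp)
  finally show ?thesis .
qed

lemma card_cycle_of: "permutation f \<Longrightarrow> card (cycle_of f u) = least_power f u"
proof -
  assume f: "permutation f"
  have "cycle_of f u = set (support f u)"
    unfolding support_set[OF f] by (auto simp: cycle_of_def)
  then show ?thesis
    using cycle_of_permutation[OF f, of u] by (simp add: distinct_map card_image)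
qed

lemma funpow_square: "(f \<circ> f) ^^ k = f ^^ (2 * k)"
proof -
  have "f \<circ> f = f ^^ 2"
    by (simp add: numeral_2_eq_2)
  then show ?thesis
    by (simp add: funpow_mult)
qed

lemma cycle_of_square: "cycle_of (f \<circ> f) u = {(f ^^ (2 * k)) u | k. True}"
  by (simp add: cycle_of_def funpow_square)

lemma image_cycle_of_square: "f ` cycle_of (f \<circ> f) u = cycle_of (f \<circ> f) (f u)"
  by (rule image_cycle_of_commute) (simp add: comp_assoc)

lemma image_image_cycle_of_square:
  "permutation (f \<circ> f) \<Longrightarrow> f ` f ` cycle_of (f \<circ> f) u = cycle_of (f \<circ> f) u"
  using image_cycle_of[of "f \<circ> f" u] by (simp add: image_comp)

lemma cycle_of_square_eq:
  assumes "f u \<in> cycle_of (f \<circ> f) u"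
  shows "cycle_of (f \<circ> f) u = cycle_of f u"
proof
  show "cycle_of (f \<circ> f) u \<subseteq> cycle_of f u"
    unfolding cycle_of_square by (auto simp: cycle_of_def)
  obtain j where j: "f u = (f ^^ (2 * j)) u"
    using assms unfolding cycle_of_square by blast
  have "(f ^^ k) u \<in> cycle_of (f \<circ> f) u" for k
  proof (induction k)
    case 0
    show ?case
      by (simp add: self_in_cycle_of)
  next
    case (Suc k)
    then obtain i where "(f ^^ k) u = (f ^^ (2 * i)) u"
      unfolding cycle_of_square by blast
    then have "(f ^^ Suc k) u = (f ^^ (2 * i)) (f u)"
      by (simp add: funpow_swap1)
    also have "\<dots> = (f ^^ (2 * (i + j))) u"
      by (simp add: j funpow_add add_mult_distrib2)
    finally show ?case
      unfolding cycle_of_square by blast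
  qed
  then show "cycle_of f u \<subseteq> cycle_of (f \<circ> f) u"
    unfolding cycle_of_def by blast
qed

lemma cycle_of_square_odd_period:
  assumes "odd p" "(f ^^ p) u = u"
  shows "cycle_of (f \<circ> f) u = cycle_of f u"
proof (rule cycle_of_square_eq)
  have "f u = (f ^^ (p + 1)) u"
    using assms(2) by simp
  also have "p + 1 = 2 * ((p + 1) div 2)"
    using assms(1) by simp
  finally show "f u \<in> cycle_of (f \<circ> f) u"
    unfolding cycle_of_square by blast
qed

lemma odd_card_cycle_of_square:
  assumes f: "permutation f" and inv: "f ` cycle_of (f \<circ> f) u = cycle_of (f \<circ> f) u"
  shows "odd (card (cycle_of (f \<circ> f) u))"
proof -
  have fu: "f u \<in> cycle_of (f \<circ> f) u"
    using inv self_in_cycle_of by blast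
  then obtain j where j: "(f ^^ 1) u = (f ^^ (2 * j)) u"
    unfolding cycle_of_square by auto
  obtain q where q: "odd q" "(f ^^ q) u = u"
  proof (cases "j = 0")
    case True
    then show ?thesis
      using j that[of 1] by simp
  next
    case False
    then have "(f ^^ (2 * j - 1)) u = u"
      using funpow_diff[OF bij_is_inj[OF permutation_bijective[OF f]] _ j] by simp
    moreover have "odd (2 * j - 1)"
      using False by presburger
    ultimately show ?thesis
      by (rule that[rotated])
  qed
  have "card (cycle_of (f \<circ> f) u) = least_power f u"
    by (simp add: cycle_of_square_eq[OF fu] card_cycle_of[OF f])
  moreover have "least_power f u dvd q"
    using q(2) by (rule least_power_minimal)
  ultimately have "card (cycle_of (f \<circ> f) u) dvd q"
    by simp
  then show ?thesis
    using q(1) dvd_trans by blast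
qed

lemma cycles_of_square_image:
  assumes p: "f permutes {0..<n}" and C: "C \<in> cycles_of n (f \<circ> f)"
  shows "C \<subseteq> {0..<n}" and "f ` C \<in> cycles_of n (f \<circ> f)" and "f ` f ` C = C"
    and "card (f ` C) = card C" and "f ` C = C \<Longrightarrow> odd (card C)"
proof -
  have pp: "(f \<circ> f) permutes {0..<n}"
    by (rule permutes_compose[OF p p])
  have perm: "permutation f" "permutation (f \<circ> f)"
    using p pp by (auto intro: permutes_imp_permutation)
  obtain u where u: "u < n" "C = cycle_of (f \<circ> f) u"
    using C by (auto simp: cycles_of_def)
  show "C \<subseteq> {0..<n}"
    using cycle_of_subset[OF pp] u by auto
  show "f ` C \<in> cycles_of n (f \<circ> f)"
    using u permutes_in_image[OF p] by (auto simp: cycles_of_def image_cycle_of_square)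
  show "f ` f ` C = C"
    using image_image_cycle_of_square[OF perm(2)] u(2) by simp
  show "card (f ` C) = card C"
    using permutes_inj[OF p] by (simp add: card_image inj_on_subset)
  show "odd (card C)" if "f ` C = C"
    using odd_card_cycle_of_square[OF perm(1)] that u(2) by simp
qed

subsection \<open>Colors of an absolute square\<close>

definition abs_square :: "nat \<Rightarrow> nat \<Rightarrow> gelt \<Rightarrow> gelt" where
  "abs_square r n g = gmult r n g (gbar r n g)"

lemma snd_abs_square [simp]: "snd (abs_square r n g) = snd g \<circ> snd g"
  by (simp add: abs_square_def gmult_def gbar_def)

lemma fst_abs_square_apply:
  assumes p: "snd g permutes {0..<n}" and x: "x < n"
  shows "fst (abs_square r n g) (snd g x) = (fst g (snd g x) + (r - fst g x) mod r) mod r"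
proof -
  have "snd g x < n"
    using permutes_in_image[OF p, of x] x by simp
  then show ?thesis
    using x by (simp add: abs_square_def gmult_def gbar_def permutes_inverses(2)[OF p])
qed

lemma abs_square_color_cong:
  assumes g: "in_G r n g" and x: "x < n"
  shows "[fst (abs_square r n g) (snd g x) + fst g x = fst g (snd g x)] (mod r)"
proof -
  have p: "snd g permutes {0..<n}" and "fst g x < r"
    using g x by (simp_all add: in_G_def)
  then have "[(fst g (snd g x) + (r - fst g x) mod r) mod r + fst g x = fst g (snd g x) + r] (mod r)"
    by (simp add: cong_def mod_simps)
  then show ?thesis
    by (simp add: fst_abs_square_apply[OF p x] cong_def)
qed

lemma cycle_color_abs_square_image:
  assumes g: "in_G r n g" and D: "D \<subseteq> {0..<n}"
  shows "[cycle_color r (abs_square r n g) (snd g ` D) + (\<Sum>i\<in>D. fst g i)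
          = (\<Sum>i\<in>snd g ` D. fst g i)] (mod r)"
proof -
  let ?h = "fst (abs_square r n g)" and ?z = "fst g" and ?s = "snd g"
  have "?s permutes {0..<n}"
    using g by (simp add: in_G_def)
  then have inj: "inj_on ?s D"
    using permutes_inj inj_on_subset by blast
  have "[cycle_color r (abs_square r n g) (?s ` D) + (\<Sum>i\<in>D. ?z i)
         = (\<Sum>x\<in>D. ?h (?s x) + ?z x)] (mod r)"
    by (simp add: cycle_color_def cong_def mod_add_left_eq sum.reindex[OF inj] sum.distrib)
  also have "[(\<Sum>x\<in>D. ?h (?s x) + ?z x) = (\<Sum>x\<in>D. ?z (?s x))] (mod r)"
    by (rule cong_sum) (use abs_square_color_cong[OF g] D in auto)
  also have "(\<Sum>x\<in>D. ?z (?s x)) = (\<Sum>i\<in>?s ` D. ?z i)"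
    by (simp add: sum.reindex[OF inj])
  finally show ?thesis .
qed

lemma cycle_color_abs_square_fixed:
  assumes "in_G r n g" "D \<subseteq> {0..<n}" "snd g ` D = D"
  shows "cycle_color r (abs_square r n g) D = 0"
proof -
  have "[cycle_color r (abs_square r n g) D = 0] (mod r)"
    using cycle_color_abs_square_image[OF assms(1,2)] assms(3) by (simp add: cong_add_rcancel_0_nat)
  then show ?thesis
    by (simp add: cycle_color_def cong_def)
qed

lemma cycle_color_abs_square_pair:
  assumes r: "0 < r" and g: "in_G r n g" and D: "D \<subseteq> {0..<n}"
    and inv: "snd g ` snd g ` D = D"
  shows "cycle_color r (abs_square r n g) (snd g ` D) = (r - cycle_color r (abs_square r n g) D) mod r"
proof (rule neg_mod_unique)
  let ?col = "cycle_color r (abs_square r n g)" and ?Z = "\<lambda>A. \<Sum>i\<in>A. fst g i"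
  have "snd g permutes {0..<n}"
    using g by (simp add: in_G_def)
  then have D': "snd g ` D \<subseteq> {0..<n}"
    using D permutes_in_image by fastforce
  have image: "[?col (snd g ` D) + ?Z D = ?Z (snd g ` D)] (mod r)"
    by (rule cycle_color_abs_square_image[OF g D])
  have preimage: "[?col D + ?Z (snd g ` D) = ?Z D] (mod r)"
    using cycle_color_abs_square_image[OF g D'] inv by simp
  have "[(?col D + ?col (snd g ` D)) + (?Z D + ?Z (snd g ` D))
         = 0 + (?Z D + ?Z (snd g ` D))] (mod r)"
    using cong_add[OF image preimage] by (simp add: ac_simps)
  then show "[?col D + ?col (snd g ` D) = 0] (mod r)"
    by (simp only: cong_add_rcancel_nat)
  show "?col D < r" "?col (snd g ` D) < r"
    using r by (simp_all add: cycle_color_def)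
qed

subsection \<open>Necessity\<close>

text \<open>A symmetric form of the three conditions of the theorem: \<open>(r - t) mod r\<close> is \<open>-t\<close> in
  \<open>\<int>/r\<close>, and the colors with \<open>-t = t\<close> are \<open>0\<close> and \<open>r/2\<close>.\<close>

definition abs_square_condition :: "nat \<Rightarrow> (nat \<Rightarrow> nat multiset) \<Rightarrow> bool" where
  "abs_square_condition r lam \<longleftrightarrow>
     (\<forall>t<r. lam ((r - t) mod r) = lam t) \<and>
     (\<forall>t<r. (r - t) mod r = t \<longrightarrow> (\<forall>k. (t = 0 \<longrightarrow> even k) \<longrightarrow> even (count (lam t) k)))"

lemma abs_square_condition_of_involution:
  fixes f :: "'a \<Rightarrow> 'a" and col len :: "'a \<Rightarrow> nat"
  assumes fin: "finite A"
    and f: "\<And>C. C \<in> A \<Longrightarrow>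
              f C \<in> A \<and> f (f C) = C \<and> len (f C) = len C \<and> col (f C) = (r - col C) mod r"
    and fixed: "\<And>C. C \<in> A \<Longrightarrow> f C = C \<Longrightarrow> col C = 0 \<and> odd (len C)"
  shows "abs_square_condition r (\<lambda>j. image_mset len (mset_set {C \<in> A. col C = j}))"
proof -
  define S where "S j k = {C \<in> A. col C = j \<and> len C = k}" for j k
  have count: "count (image_mset len (mset_set {C \<in> A. col C = j})) k = card (S j k)" for j k
    unfolding S_def using fin
    by (subst count_image_mset_eq_card_vimage) (auto intro: arg_cong[where f = card])
  have pair: "card (S ((r - t) mod r) k) = card (S t k)" if "t < r" for t k
  proof -
    have "bij_betw f (S t k) (S ((r - t) mod r) k)"
      by (rule bij_betw_byWitness[where f' = f]) (use f neg_neg_mod[OF that] in \<open>auto simp: S_def\<close>)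
    then show ?thesis
      by (simp add: bij_betw_same_card)
  qed
  have self: "even (card (S t k))" if "(r - t) mod r = t" "t = 0 \<longrightarrow> even k" for t k
    by (rule even_card_involution[where f = f]) (use fin f fixed that in \<open>auto simp: S_def\<close>)
  show ?thesis
    unfolding abs_square_condition_def
    by (intro conjI allI impI multiset_eqI) (simp_all add: count pair self)
qed

lemma abs_square_condition_cycle_type:
  assumes r: "0 < r" and g: "in_G r n g"
  shows "abs_square_condition r (cycle_type r n (abs_square r n g))"
proof -
  let ?s = "snd g" and ?col = "cycle_color r (abs_square r n g)"
  have p: "?s permutes {0..<n}"
    using g by (simp add: in_G_def)
  have type: "cycle_type r n (abs_square r n g)
      = (\<lambda>j. image_mset card (mset_set {C \<in> cycles_of n (?s \<circ> ?s). ?col C = j}))"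
    by (rule ext) (simp add: cycle_type_def)
  show ?thesis
    unfolding type
  proof (rule abs_square_condition_of_involution)
    show "finite (cycles_of n (?s \<circ> ?s))"
      by (simp add: cycles_of_def)
  next
    fix C assume "C \<in> cycles_of n (?s \<circ> ?s)"
    note C = cycles_of_square_image[OF p this]
    show "?s ` C \<in> cycles_of n (?s \<circ> ?s) \<and> ?s ` ?s ` C = C \<and> card (?s ` C) = card C \<and>
          ?col (?s ` C) = (r - ?col C) mod r"
      using C cycle_color_abs_square_pair[OF r g C(1)] by simp
    show "?col C = 0 \<and> odd (card C)" if "?s ` C = C"
      using C(1,5) cycle_color_abs_square_fixed[OF g C(1)] that by simp
  qed
qed

subsection \<open>Sufficiency\<close>

definition rotate_block :: "nat \<Rightarrow> nat \<Rightarrow> nat \<Rightarrow> nat" where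
  "rotate_block n m i = (if n \<le> i \<and> i < n + m then (if i + 1 = n + m then n else i + 1) else i)"

lemma rotate_block_apply: "a < m \<Longrightarrow> rotate_block n m (n + a) = n + (a + 1) mod m"
  by (auto simp: rotate_block_def)

lemma rotate_block_ge: "n \<le> i \<Longrightarrow> n \<le> rotate_block n m i"
  by (auto simp: rotate_block_def)

lemma rotate_block_permutes: "rotate_block n m permutes {n..<n + m}"
proof (rule bij_imp_permutes)
  have "inj_on (rotate_block n m) {n..<n + m}"
    by (auto simp: inj_on_def rotate_block_def split: if_splits)
  moreover have "rotate_block n m ` {n..<n + m} \<subseteq> {n..<n + m}"
    by (auto simp: rotate_block_def)
  ultimately show "bij_betw (rotate_block n m) {n..<n + m} {n..<n + m}"
    by (simp add: bij_betw_def endo_inj_surj)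
qed (auto simp: rotate_block_def)

lemma funpow_rotate_block:
  assumes "a < m"
  shows "(rotate_block n m ^^ j) (n + a) = n + (a + j) mod m"
proof (induction j)
  case (Suc j)
  have "(a + j) mod m < m"
    using assms by simp
  then show ?case
    by (simp add: Suc rotate_block_apply mod_simps)
qed (use assms in simp)

lemma cycle_of_rotate_block:
  assumes "a < m"
  shows "cycle_of (rotate_block n m) (n + a) = {n..<n + m}"
proof
  show "cycle_of (rotate_block n m) (n + a) \<subseteq> {n..<n + m}"
    using assms by (auto simp: cycle_of_def funpow_rotate_block)
  show "{n..<n + m} \<subseteq> cycle_of (rotate_block n m) (n + a)"
  proof
    fix x assume "x \<in> {n..<n + m}"
    then obtain b where b: "b < m" "x = n + b"
      by (intro that[of "x - n"]) auto
    have "a + (b + (m - a)) = b + m"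
      using assms by simp
    then have "(rotate_block n m ^^ (b + (m - a))) (n + a) = x"
      using b by (simp add: funpow_rotate_block[OF assms])
    then show "x \<in> cycle_of (rotate_block n m) (n + a)"
      using funpow_in_cycle_of by metis
  qed
qed

lemma cycle_of_rotate_block_square_odd:
  assumes "odd m" "u \<in> {n..<n + m}"
  shows "cycle_of (rotate_block n m \<circ> rotate_block n m) u = {n..<n + m}"
proof -
  obtain a where a: "a < m" "u = n + a"
    using assms(2) by (intro that[of "u - n"]) auto
  have "(rotate_block n m ^^ m) u = u"
    using a by (simp add: funpow_rotate_block)
  then show ?thesis
    using cycle_of_square_odd_period[OF assms(1)] cycle_of_rotate_block a by simp
qed

lemma cycle_of_rotate_block_square_even:
  assumes "b < 2" "0 < k"
  shows "cycle_of (rotate_block n (2 * k) \<circ> rotate_block n (2 * k)) (n + b)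
           = (\<lambda>i. n + 2 * i + b) ` {..<k}"
proof -
  have mod: "(b + 2 * j) mod (2 * k) = 2 * (j mod k) + b" for j
    using assms(1) by (cases b) (auto simp: mod_mult2_eq)
  have "cycle_of (rotate_block n (2 * k) \<circ> rotate_block n (2 * k)) (n + b)
          = {n + 2 * (j mod k) + b | j. True}"
    using assms by (simp add: cycle_of_square funpow_rotate_block mod add.assoc)
  also have "\<dots> = (\<lambda>i. n + 2 * i + b) ` {..<k}"
  proof
    show "{n + 2 * (j mod k) + b | j. True} \<subseteq> (\<lambda>i. n + 2 * i + b) ` {..<k}"
      using assms(2) by auto
    show "(\<lambda>i. n + 2 * i + b) ` {..<k} \<subseteq> {n + 2 * (j mod k) + b | j. True}"
    proof
      fix x assume "x \<in> (\<lambda>i. n + 2 * i + b) ` {..<k}"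
      then obtain i where "i < k" "x = n + 2 * i + b"
        by blast
      then have "x = n + 2 * (i mod k) + b"
        by simp
      then show "x \<in> {n + 2 * (j mod k) + b | j. True}"
        by blast
    qed
  qed
  finally show ?thesis .
qed

lemma cycles_rotate_block_square_even:
  fixes n k :: nat
  assumes k: "0 < k"
  defines "\<rho> \<equiv> rotate_block n (2 * k)"
  shows "cycle_of (\<rho> \<circ> \<rho>) ` {n..<n + 2 * k} = {cycle_of (\<rho> \<circ> \<rho>) n, cycle_of (\<rho> \<circ> \<rho>) (n + 1)}"
proof
  have perm: "permutation (\<rho> \<circ> \<rho>)"
    unfolding \<rho>_def using permutes_compose[OF rotate_block_permutes rotate_block_permutes]
    by (rule permutes_imp_permutation[rotated]) simp
  have "cycle_of (\<rho> \<circ> \<rho>) x \<in> {cycle_of (\<rho> \<circ> \<rho>) n, cycle_of (\<rho> \<circ> \<rho>) (n + 1)}"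
    if x: "x \<in> {n..<n + 2 * k}" for x
  proof -
    define b i where "b = (x - n) mod 2" and "i = (x - n) div 2"
    have b: "b < 2" and "b = 0 \<or> b = 1"
      by (auto simp: b_def)
    have "x - n < k * 2"
      using x by auto
    then have "i < k"
      by (simp add: i_def less_mult_imp_div_less)
    moreover have "x = n + 2 * i + b"
      using x mult_div_mod_eq[of 2 "x - n"] by (simp add: b_def i_def)
    ultimately have "x \<in> (\<lambda>i. n + 2 * i + b) ` {..<k}"
      by blast
    then have "x \<in> cycle_of (\<rho> \<circ> \<rho>) (n + b)"
      using cycle_of_rotate_block_square_even[OF b k] by (simp add: \<rho>_def)
    then have "cycle_of (\<rho> \<circ> \<rho>) x = cycle_of (\<rho> \<circ> \<rho>) (n + b)"
      by (rule cycle_of_eq[OF perm])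
    with \<open>b = 0 \<or> b = 1\<close> show ?thesis
      by (elim disjE) simp_all
  qed
  then show "cycle_of (\<rho> \<circ> \<rho>) ` {n..<n + 2 * k}
      \<subseteq> {cycle_of (\<rho> \<circ> \<rho>) n, cycle_of (\<rho> \<circ> \<rho>) (n + 1)}"
    by blast
  have "n \<in> {n..<n + 2 * k}" "n + 1 \<in> {n..<n + 2 * k}"
    using k by auto
  then show "{cycle_of (\<rho> \<circ> \<rho>) n, cycle_of (\<rho> \<circ> \<rho>) (n + 1)}
      \<subseteq> cycle_of (\<rho> \<circ> \<rho>) ` {n..<n + 2 * k}"
    by blast
qed

definition extend :: "nat \<Rightarrow> nat \<Rightarrow> (nat \<Rightarrow> nat) \<Rightarrow> gelt \<Rightarrow> gelt" where
  "extend n m c g =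
     ((\<lambda>i. if i < n then fst g i else if i < n + m then c i else 0), snd g \<circ> rotate_block n m)"

lemma snd_extend_low: "snd g permutes {0..<n} \<Longrightarrow> x < n \<Longrightarrow> snd (extend n m c g) x = snd g x"
  by (simp add: extend_def rotate_block_def)

lemma snd_extend_high:
  "snd g permutes {0..<n} \<Longrightarrow> n \<le> x \<Longrightarrow> snd (extend n m c g) x = rotate_block n m x"
  using rotate_block_ge[of n x m] by (simp add: extend_def permutes_not_in)

lemma snd_extend_permutes:
  assumes "snd g permutes {0..<n}"
  shows "snd (extend n m c g) permutes {0..<n + m}"
proof -
  have "snd g permutes {0..<n + m}"
    using assms by (rule permutes_subset) auto
  moreover have "rotate_block n m permutes {0..<n + m}"
    using rotate_block_permutes by (rule permutes_subset) auto
  ultimately show ?thesis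
    unfolding extend_def by (simp add: permutes_compose)
qed

lemma in_G_extend:
  assumes "in_G r n g" and "\<And>i. n \<le> i \<Longrightarrow> i < n + m \<Longrightarrow> c i < r"
  shows "in_G r (n + m) (extend n m c g)"
  using snd_extend_permutes[of g n m c] assms by (auto simp: in_G_def extend_def)

lemma cycles_of_extend:
  assumes p: "snd g permutes {0..<n}"
  shows "cycles_of (n + m) (snd (extend n m c g) \<circ> snd (extend n m c g))
           = cycles_of n (snd g \<circ> snd g) \<union> cycle_of (rotate_block n m \<circ> rotate_block n m) ` {n..<n + m}"
proof -
  let ?s' = "snd (extend n m c g)"
  have low: "cycle_of (?s' \<circ> ?s') u = cycle_of (snd g \<circ> snd g) u" if "u < n" for u
    by (rule cycle_of_cong[where S = "{0..<n}"])
       (use that permutes_in_image[OF p] snd_extend_low[OF p] in auto)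
  have high: "cycle_of (?s' \<circ> ?s') u = cycle_of (rotate_block n m \<circ> rotate_block n m) u"
    if "n \<le> u" for u
    by (rule cycle_of_cong[where S = "{n..}"])
       (use that rotate_block_ge snd_extend_high[OF p] in auto)
  have split: "{0..<n + m} = {0..<n} \<union> {n..<n + m}"
    by auto
  show ?thesis
    unfolding cycles_of_def split image_Un using low high by (auto intro!: image_cong)
qed

lemma fst_abs_square_extend_low:
  assumes p: "snd g permutes {0..<n}" and i: "i < n"
  shows "fst (abs_square r (n + m) (extend n m c g)) i = fst (abs_square r n g) i"
proof -
  let ?g' = "extend n m c g"
  define x where "x = inv (snd g) i"
  have x: "x < n" "snd g x = i"
    using permutes_in_image[OF permutes_inv[OF p]] permutes_inverses(1)[OF p] i
    by (auto simp: x_def)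
  have "fst (abs_square r (n + m) ?g') i = fst (abs_square r (n + m) ?g') (snd ?g' x)"
    using snd_extend_low[OF p x(1)] x(2) by simp
  also have "\<dots> = (fst ?g' (snd ?g' x) + (r - fst ?g' x) mod r) mod r"
    using snd_extend_permutes[OF p] x(1) by (simp add: fst_abs_square_apply)
  also have "\<dots> = (fst g (snd g x) + (r - fst g x) mod r) mod r"
    using snd_extend_low[OF p x(1)] x i by (simp add: extend_def)
  also have "\<dots> = fst (abs_square r n g) i"
    using fst_abs_square_apply[OF p x(1)] x(2) by simp
  finally show ?thesis .
qed

lemma cycle_type_extend:
  assumes p: "snd g permutes {0..<n}"
  shows "cycle_type r (n + m) (abs_square r (n + m) (extend n m c g)) j =
           cycle_type r n (abs_square r n g) j +
           image_mset card (mset_set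
             {C \<in> cycle_of (rotate_block n m \<circ> rotate_block n m) ` {n..<n + m}.
              cycle_color r (abs_square r (n + m) (extend n m c g)) C = j})"
proof -
  let ?H = "abs_square r n g" and ?H' = "abs_square r (n + m) (extend n m c g)"
  define A where "A = cycles_of n (snd g \<circ> snd g)"
  define B where "B = cycle_of (rotate_block n m \<circ> rotate_block n m) ` {n..<n + m}"
  have A_low: "C \<subseteq> {0..<n}" if "C \<in> A" for C
    using cycles_of_square_image(1)[OF p] that by (simp add: A_def)
  have B_high: "\<exists>u\<in>C. n \<le> u" if "C \<in> B" for C
    using that self_in_cycle_of by (fastforce simp: B_def)
  have disjoint: "{C \<in> A. cycle_color r ?H C = j} \<inter> {C \<in> B. cycle_color r ?H' C = j} = {}"
    using A_low B_high by fastforce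
  have "cycle_color r ?H' C = cycle_color r ?H C" if "C \<in> A" for C
    using A_low[OF that] fst_abs_square_extend_low[OF p]
    unfolding cycle_color_def by (intro arg_cong[where f = "\<lambda>x. x mod r"] sum.cong) auto
  then have "{C \<in> A \<union> B. cycle_color r ?H' C = j}
               = {C \<in> A. cycle_color r ?H C = j} \<union> {C \<in> B. cycle_color r ?H' C = j}"
    by auto
  moreover have "finite A" "finite B"
    by (simp_all add: A_def B_def cycles_of_def)
  ultimately show ?thesis
    unfolding cycle_type_def snd_abs_square cycles_of_extend[OF p] A_def[symmetric] B_def[symmetric]
    using disjoint by (simp add: mset_set_Union)
qed

lemma cycle_color_extend_image:
  assumes g: "in_G r n g" and c: "\<And>i. n \<le> i \<Longrightarrow> i < n + m \<Longrightarrow> c i < r"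
    and D: "D \<subseteq> {n..<n + m}"
  shows "[cycle_color r (abs_square r (n + m) (extend n m c g)) (rotate_block n m ` D) + (\<Sum>i\<in>D. c i)
          = (\<Sum>i\<in>rotate_block n m ` D. c i)] (mod r)"
proof -
  let ?g' = "extend n m c g"
  have p: "snd g permutes {0..<n}"
    using g by (simp add: in_G_def)
  have image: "snd ?g' ` D = rotate_block n m ` D"
    using D snd_extend_high[OF p] by (intro image_cong) auto
  have D': "rotate_block n m ` D \<subseteq> {n..<n + m}"
    using D permutes_image[OF rotate_block_permutes] by blast
  have fst: "fst ?g' i = c i" if "i \<in> {n..<n + m}" for i
    using that by (simp add: extend_def)
  have "(\<Sum>i\<in>D. fst ?g' i) = (\<Sum>i\<in>D. c i)"
    by (rule sum.cong) (use D fst in auto)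
  moreover have "(\<Sum>i\<in>rotate_block n m ` D. fst ?g' i) = (\<Sum>i\<in>rotate_block n m ` D. c i)"
    by (rule sum.cong) (use D' fst in auto)
  moreover have "[cycle_color r (abs_square r (n + m) ?g') (snd ?g' ` D) + (\<Sum>i\<in>D. fst ?g' i)
          = (\<Sum>i\<in>snd ?g' ` D. fst ?g' i)] (mod r)"
    by (rule cycle_color_abs_square_image[OF in_G_extend[OF g c]]) (use D in auto)
  ultimately show ?thesis
    unfolding image by simp
qed

lemma cycle_type_extend_odd:
  assumes g: "in_G r n g" and r: "0 < r" and m: "odd m"
  shows "cycle_type r (n + m) (abs_square r (n + m) (extend n m (\<lambda>_. 0) g)) j
           = cycle_type r n (abs_square r n g) j + (if j = 0 then {#m#} else {#})"
proof -
  let ?g' = "extend n m (\<lambda>_. 0) g" and ?\<rho> = "rotate_block n m"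
  have p: "snd g permutes {0..<n}"
    using g by (simp add: in_G_def)
  have "cycle_of (?\<rho> \<circ> ?\<rho>) ` {n..<n + m} = (\<lambda>_. {n..<n + m}) ` {n..<n + m}"
    using cycle_of_rotate_block_square_odd[OF m] by (intro image_cong) auto
  also have "\<dots> = {{n..<n + m}}"
    using odd_pos[OF m] by (simp add: image_constant_conv)
  finally have cycles: "cycle_of (?\<rho> \<circ> ?\<rho>) ` {n..<n + m} = {{n..<n + m}}" .
  have "snd ?g' ` {n..<n + m} = ?\<rho> ` {n..<n + m}"
    using snd_extend_high[OF p] by (intro image_cong) auto
  also have "\<dots> = {n..<n + m}"
    by (rule permutes_image[OF rotate_block_permutes])
  finally have "cycle_color r (abs_square r (n + m) ?g') {n..<n + m} = 0"
    using in_G_extend[OF g] r by (intro cycle_color_abs_square_fixed) auto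
  then have "{C \<in> {{n..<n + m}}. cycle_color r (abs_square r (n + m) ?g') C = j}
               = (if j = 0 then {{n..<n + m}} else {})"
    by auto
  then show ?thesis
    unfolding cycle_type_extend[OF p] cycles by simp
qed

lemma cycle_type_extend_even:
  assumes g: "in_G r n g" and t: "t < r" and k: "0 < k"
  shows "cycle_type r (n + 2 * k)
           (abs_square r (n + 2 * k) (extend n (2 * k) (\<lambda>i. if i = n then t else 0) g)) j
         = cycle_type r n (abs_square r n g) j
           + ((if j = t then {#k#} else {#}) + (if j = (r - t) mod r then {#k#} else {#}))"
proof -
  let ?c = "\<lambda>i. if i = n then t else 0" and ?\<rho> = "rotate_block n (2 * k)"
  let ?col = "cycle_color r (abs_square r (n + 2 * k) (extend n (2 * k) ?c g))"
  define E where "E = cycle_of (?\<rho> \<circ> ?\<rho>) n"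
  define Od where "Od = cycle_of (?\<rho> \<circ> ?\<rho>) (n + 1)"
  have p: "snd g permutes {0..<n}"
    using g by (simp add: in_G_def)
  have E_eq: "E = (\<lambda>i. n + 2 * i) ` {..<k}" and Od_eq: "Od = (\<lambda>i. n + 2 * i + 1) ` {..<k}"
    using cycle_of_rotate_block_square_even[of 0 k n] cycle_of_rotate_block_square_even[of 1 k n] k
    by (simp_all add: E_def Od_def)
  have nE: "n \<in> E" and nOd: "n \<notin> Od" and sub: "E \<subseteq> {n..<n + 2 * k}" "Od \<subseteq> {n..<n + 2 * k}"
    using k by (auto simp: E_eq Od_eq)
  have "?\<rho> n = n + 1"
    using rotate_block_apply[of 0 "2 * k" n] k by simp
  then have \<rho>E: "?\<rho> ` E = Od"
    by (simp add: E_def Od_def image_cycle_of_square)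
  have "permutation (?\<rho> \<circ> ?\<rho>)"
    using permutes_compose[OF rotate_block_permutes rotate_block_permutes]
    by (rule permutes_imp_permutation[rotated]) simp
  then have "?\<rho> ` ?\<rho> ` E = E"
    unfolding E_def by (rule image_image_cycle_of_square)
  then have \<rho>Od: "?\<rho> ` Od = E"
    by (simp add: \<rho>E)
  have image: "[?col (?\<rho> ` D) + (\<Sum>i\<in>D. ?c i) = (\<Sum>i\<in>?\<rho> ` D. ?c i)] (mod r)"
    if "D \<subseteq> {n..<n + 2 * k}" for D
    by (rule cycle_color_extend_image[OF g _ that]) (use t in simp)
  have "(\<Sum>i\<in>E. ?c i) = t" "(\<Sum>i\<in>Od. ?c i) = 0"
    using nE nOd by (simp_all add: sum.delta E_eq Od_eq)
  then have "[?col E = t] (mod r)" "[?col Od + t = 0] (mod r)"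
    using image[OF sub(2)] image[OF sub(1)] by (simp_all add: \<rho>E \<rho>Od)
  then have colE: "?col E = t" and colOd: "?col Od = (r - t) mod r"
    using t by (auto simp: cong_def cycle_color_def add.commute intro!: neg_mod_unique)
  have "card E = k" "card Od = k"
    by (simp_all add: E_eq Od_eq card_image inj_on_def)
  moreover have "E \<noteq> Od"
    using nE nOd by blast
  ultimately show ?thesis
    unfolding cycle_type_extend[OF p] cycles_rotate_block_square_even[OF k] E_def[symmetric] Od_def[symmetric]
      image_mset_mset_set_filter_pair[OF \<open>E \<noteq> Od\<close>]
    using colE colOd by (auto simp: eq_commute[of j])
qed

definition abs_square_type :: "nat \<Rightarrow> nat \<Rightarrow> (nat \<Rightarrow> nat multiset) \<Rightarrow> bool" where
  "abs_square_type r n lam \<longleftrightarrow> (\<exists>g. in_G r n g \<and> cycle_type r n (abs_square r n g) = lam)"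

inductive square_block :: "nat \<Rightarrow> (nat \<Rightarrow> nat multiset) \<Rightarrow> nat \<Rightarrow> bool" for r where
  odd_cycle: "odd m \<Longrightarrow> square_block r (\<lambda>j. if j = 0 then {#m#} else {#}) m"
| cycle_pair: "t < r \<Longrightarrow> 0 < k \<Longrightarrow>
    square_block r (\<lambda>j. (if j = t then {#k#} else {#}) + (if j = (r - t) mod r then {#k#} else {#}))
      (2 * k)"

lemma abs_square_type_empty: "abs_square_type r 0 (\<lambda>_. {#})"
proof -
  have "in_G r 0 (\<lambda>_. 0, id)"
    by (simp add: in_G_def permutes_id)
  moreover have "cycle_type r 0 (abs_square r 0 (\<lambda>_. 0, id)) = (\<lambda>_. {#})"
    by (simp add: cycle_type_def cycles_of_def fun_eq_iff)
  ultimately show ?thesis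
    unfolding abs_square_type_def by blast
qed

lemma abs_square_type_add_block:
  assumes r: "0 < r" and mu: "abs_square_type r n mu" and B: "square_block r B s"
  shows "abs_square_type r (n + s) (\<lambda>j. mu j + B j)"
proof -
  obtain g where g: "in_G r n g" "cycle_type r n (abs_square r n g) = mu"
    using mu by (auto simp: abs_square_type_def)
  from B show ?thesis
  proof cases
    case odd_cycle
    then show ?thesis
      using in_G_extend[OF g(1), of s "\<lambda>_. 0"] cycle_type_extend_odd[OF g(1) r] r g(2)
      unfolding abs_square_type_def by (intro exI[of _ "extend n s (\<lambda>_. 0) g"]) auto
  next
    case (cycle_pair t k)
    then show ?thesis
      using in_G_extend[OF g(1), of "2 * k" "\<lambda>i. if i = n then t else 0"]
        cycle_type_extend_even[OF g(1)] g(2)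
      unfolding abs_square_type_def
      by (intro exI[of _ "extend n (2 * k) (\<lambda>i. if i = n then t else 0) g"]) auto
  qed
qed

lemma square_block_size:
  assumes "0 < r" "square_block r B s"
  shows "0 < s \<and> (\<Sum>j<r. sum_mset (B j)) = s"
  using assms(2)
proof cases
  case odd_cycle
  then show ?thesis
    using assms(1) sum_single_part[of 0 r s] odd_pos by simp
next
  case (cycle_pair t k)
  then show ?thesis
    using sum_single_part[of t r k] sum_single_part[of "(r - t) mod r" r k] assms(1)
    by (simp add: sum.distrib)
qed

lemma abs_square_condition_block:
  assumes "square_block r B s"
  shows "abs_square_condition r B"
  using assms
proof cases
  case odd_cycle
  have "(r - u) mod r = 0 \<longleftrightarrow> u = 0" if "u < r" for u
    using neg_mod_eq_iff[OF that, of 0] that by auto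
  then show ?thesis
    using odd_cycle unfolding abs_square_condition_def by auto
next
  case (cycle_pair t k)
  have swap: "(r - u) mod r = t \<longleftrightarrow> u = (r - t) mod r"
    and fixed: "(r - u) mod r = (r - t) mod r \<longleftrightarrow> u = t" if "u < r" for u
    using neg_mod_eq_iff[OF that cycle_pair(3)] neg_mod_inj[OF that cycle_pair(3)] by auto
  show ?thesis
    unfolding abs_square_condition_def
  proof (intro conjI allI impI)
    fix u assume u: "u < r"
    show "B ((r - u) mod r) = B u"
      using cycle_pair(1) swap[OF u] fixed[OF u] by (simp add: add.commute)
  next
    fix u and k' :: nat
    assume u: "u < r" and "(r - u) mod r = u"
    then have "u = t \<longleftrightarrow> u = (r - t) mod r"
      using swap[OF u] by auto
    then show "even (count (B u) k')"
      using cycle_pair(1) by auto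
  qed
qed

lemma abs_square_condition_diff:
  assumes "abs_square_condition r lam" "abs_square_condition r B"
  shows "abs_square_condition r (\<lambda>j. lam j - B j)"
  using assms unfolding abs_square_condition_def by auto

lemma square_block_exists:
  assumes cond: "abs_square_condition r lam"
    and j0: "j0 < r" and k: "k \<in># lam j0" and pos: "0 \<notin># lam j0"
  obtains B s where "square_block r B s" "\<And>j. B j \<subseteq># lam j"
proof (cases "j0 = 0 \<and> odd k")
  case True
  then show ?thesis
    using k by (intro that[OF square_block.odd_cycle]) auto
next
  case False
  let ?j1 = "(r - j0) mod r"
  have k0: "0 < k"
    using pos k by (cases k) auto
  have "(if j = j0 then {#k#} else {#}) + (if j = ?j1 then {#k#} else {#}) \<subseteq># lam j" for j
  proof (cases "?j1 = j0")
    case True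
    then have "even (count (lam j0) k)"
      using cond j0 False by (auto simp: abs_square_condition_def)
    moreover have "0 < count (lam j0) k"
      using k by simp
    ultimately have "2 \<le> count (lam j0) k"
      by presburger
    then show ?thesis
      using True by (auto simp: subseteq_mset_def)
  next
    case False
    have "lam ?j1 = lam j0"
      using cond j0 by (simp add: abs_square_condition_def)
    then show ?thesis
      using False k by auto
  qed
  then show ?thesis
    by (rule that[OF square_block.cycle_pair[OF j0 k0]])
qed

lemma rpartite_partition_diff:
  assumes lam: "rpartite_partition r n lam" and B: "\<And>j. B j \<subseteq># lam j"
    and s: "(\<Sum>j<r. sum_mset (B j)) = s"
  shows "s \<le> n \<and> rpartite_partition r (n - s) (\<lambda>j. lam j - B j)"
proof -
  have "(\<Sum>j<r. sum_mset (lam j - B j)) + s = (\<Sum>j<r. sum_mset (lam j - B j + B j))"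
    using s by (simp add: sum.distrib)
  also have "\<dots> = n"
    using lam B by (simp add: rpartite_partition_def subset_mset.diff_add)
  finally have "(\<Sum>j<r. sum_mset (lam j - B j)) + s = n" .
  moreover have "0 \<notin># lam j - B j" for j
    using lam by (auto simp: rpartite_partition_def dest: in_diffD)
  ultimately show ?thesis
    using lam by (auto simp: rpartite_partition_def)
qed

lemma abs_square_type_if_condition:
  assumes r: "0 < r"
  shows "rpartite_partition r n lam \<Longrightarrow> abs_square_condition r lam \<Longrightarrow> abs_square_type r n lam"
proof (induction n arbitrary: lam rule: less_induct)
  case (less n lam)
  show ?case
  proof (cases "\<exists>j<r. lam j \<noteq> {#}")
    case False
    then have "lam j = {#}" for j
      using less.prems(1) by (cases "j < r") (auto simp: rpartite_partition_def)
    moreover from this have "n = 0"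
      using less.prems(1) by (simp add: rpartite_partition_def)
    ultimately show ?thesis
      using abs_square_type_empty by (simp add: fun_eq_iff)
  next
    case True
    then obtain j0 k where j0: "j0 < r" and k: "k \<in># lam j0"
      by (auto elim: multiset_nonemptyE)
    moreover have "0 \<notin># lam j0"
      using less.prems(1) by (simp add: rpartite_partition_def)
    ultimately obtain B s where B: "square_block r B s" "\<And>j. B j \<subseteq># lam j"
      using square_block_exists[OF less.prems(2)] by blast
    have s: "0 < s" "(\<Sum>j<r. sum_mset (B j)) = s"
      using square_block_size[OF r B(1)] by auto
    have red: "s \<le> n" "rpartite_partition r (n - s) (\<lambda>j. lam j - B j)"
      using rpartite_partition_diff[OF less.prems(1) B(2) s(2)] by auto
    moreover have "abs_square_condition r (\<lambda>j. lam j - B j)"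
      using abs_square_condition_diff[OF less.prems(2) abs_square_condition_block[OF B(1)]] .
    ultimately have "abs_square_type r (n - s) (\<lambda>j. lam j - B j)"
      using less.IH[of "n - s"] s(1) by simp
    then have "abs_square_type r (n - s + s) (\<lambda>j. lam j - B j + B j)"
      using abs_square_type_add_block[OF r _ B(1)] by blast
    then show ?thesis
      using red(1) B(2) by (simp add: subset_mset.diff_add)
  qed
qed

lemma abs_square_conditionD:
  assumes r: "0 < r" and S: "abs_square_condition r lam"
  shows "\<And>k. even k \<Longrightarrow> even (count (lam 0) k)"
    and "\<And>t. 1 \<le> t \<Longrightarrow> 2 * t < r \<Longrightarrow> lam t = lam (r - t)"
    and "\<And>k. even r \<Longrightarrow> even (count (lam (r div 2)) k)"
proof -
  have sym: "lam ((r - t) mod r) = lam t" if "t < r" for t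
    using S that by (simp add: abs_square_condition_def)
  have self: "even (count (lam t) k)" if "t < r" "(r - t) mod r = t" "t = 0 \<longrightarrow> even k" for t k
    using S that by (simp add: abs_square_condition_def)
  show "even (count (lam 0) k)" if "even k" for k
    using self[of 0 k] r that by simp
  show "lam t = lam (r - t)" if "1 \<le> t" "2 * t < r" for t
  proof -
    have "r - t < r"
      using that by simp
    then have "(r - t) mod r = r - t"
      by (rule mod_less)
    then show ?thesis
      using sym[of t] that by simp
  qed
  show "even (count (lam (r div 2)) k)" if "even r" for k
  proof -
    obtain q where "r = 2 * q"
      using \<open>even r\<close> by (rule evenE)
    then have "r div 2 < r" "(r - r div 2) mod r = r div 2" "r div 2 \<noteq> 0"
      using r by simp_all
    then show ?thesis
      using self[of "r div 2" k] by simp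
  qed
qed

lemma abs_square_conditionI:
  assumes zero: "\<And>k. even k \<Longrightarrow> even (count (lam 0) k)"
    and pairs: "\<And>t. 1 \<le> t \<Longrightarrow> 2 * t < r \<Longrightarrow> lam t = lam (r - t)"
    and half: "\<And>k. even r \<Longrightarrow> even (count (lam (r div 2)) k)"
  shows "abs_square_condition r lam"
  unfolding abs_square_condition_def
proof (intro conjI allI impI)
  fix t assume t: "t < r"
  consider "t = 0" | "2 * t = r" | "0 < t" "2 * t < r" | "r < 2 * t"
    by linarith
  then show "lam ((r - t) mod r) = lam t"
  proof cases
    case 3
    then show ?thesis
      using pairs[of t] by simp
  next
    case 4
    then show ?thesis
      using pairs[of "r - t"] t by simp
  qed (use t in auto)
next
  fix t and k :: nat
  assume t: "t < r" and self: "(r - t) mod r = t" "t = 0 \<longrightarrow> even k"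
  show "even (count (lam t) k)"
  proof (cases "t = 0")
    case True
    then show ?thesis
      using zero self by simp
  next
    case False
    then have "r = 2 * t"
      using t self by auto
    then show ?thesis
      using half[of k] by simp
  qed
qed

theorem proposition6p11:
  fixes r n :: nat and lam :: "nat \<Rightarrow> nat multiset"
  assumes "0 < r" and "rpartite_partition r n lam"
  shows "(\<exists>g. in_G r n g \<and> cycle_type r n (gmult r n g (gbar r n g)) = lam) \<longleftrightarrow>
     ((\<forall>k. even k \<longrightarrow> even (count (lam 0) k)) \<and>
      (\<forall>t. 1 \<le> t \<and> 2 * t < r \<longrightarrow> lam t = lam (r - t)) \<and>
      (even r \<longrightarrow> (\<forall>k. even (count (lam (r div 2)) k))))"
proof -
  have "(\<exists>g. in_G r n g \<and> cycle_type r n (gmult r n g (gbar r n g)) = lam)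
          \<longleftrightarrow> abs_square_type r n lam"
    by (simp add: abs_square_type_def abs_square_def)
  also have "\<dots> \<longleftrightarrow> abs_square_condition r lam"
    using abs_square_condition_cycle_type[OF assms(1)] abs_square_type_if_condition[OF assms]
    by (auto simp: abs_square_type_def)
  finally show ?thesis
    using abs_square_conditionD[OF assms(1)] abs_square_conditionI[of lam r] by blast
qed

end
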